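(* In the incomplete-information network formation process (agents playing the SOE each period, beliefs following the simple updating rule), for every type vector $\kappa$: (1) If $\mathbb{E}[f(x)]<c$, information never becomes complete: no link ever forms and all agents' beliefs about others' types stay at the prior forever. (2) If $\mathbb{E}[f(x)]\ge c$, then with probability one information becomes complete within finitely many periods, and in every stable network (together with its associated beliefs) information is complete.
   Context: Model. There are $N\ge 2$ agents $I=\{1,\dots,N\}$. Each agent $i$ has a private type $k_i\in X$; types are drawn i.i.d. from a prior distribution $H$ on $X$, and $\kappa=(k_1,\dots,k_N)$ is the type vector. There is a function $f:X\to\mathbb{R}_{>0}$, a link cost $c>0$ and a decay factor $\delta\in(0,1)$; $\mathbb{E}[f(x)]=\int_X f\,dH$ is assumed well defined. A network ${\bf g}$ is a set of unordered pairs $ij$ ($i\neq j$), called links. Agents $i,j$ are connected in ${\bf g}$ if there is a path of links between them; $d_{ij}$ is the length of a shortest such path ($\infty$ if not connected); $C_i$ denotes the component of ${\bf g}$ containing $i$. Agent $i$'s payoff is $u_i({\bf g})=\sum_{j\neq i,\ j\text{ connected to }i}\delta^{d_{ij}-1}f(k_j)-c\cdot\#\{j: ij\in{\bf g}\}$. Dynamics. The network is empty at $t=0$. In each period $t\ge1$ one unordered pair $(i,j)$ is selected uniformly at random (probability $2/(N(N-1))$), independently over periods; the sequence of selected pairs up to $t$ is the selection path $\gamma(t)$. The selected agents observe each other's components and simultaneously choose $a_{ij},a_{ji}\in\{0,1\}$ (1 = agree to form the link if absent / keep it if present, 0 = refuse / sever); after the period the link $ij$ is present iff $a_{ij}=a_{ji}=1$.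 Agents are myopic and play the stable optimistic equilibrium (SOE): agent $i$ chooses $1$ iff his expected current payoff (w.r.t. his belief $B_i$) from the network resulting with the link $ij$ is at least his current payoff without it. Information. Under complete information every agent knows $\kappa$. Under incomplete information (simple updating rule), if $i$ and $j$ have ever been connected at some period so far, each knows the other's type; otherwise each one's belief about the other's type is the prior $H$. Information is complete when every agent's belief is degenerate on the true $\kappa$, and incomplete otherwise. Stability. Given a selection path, the resulting network ${\bf g}(\gamma(t))$ and beliefs $B(\gamma(t))$ are uniquely determined. A pair $({\bf g},B)$ is a stable network if no link is formed or severed along any subsequent selection path. *)

theory Defs
  imports "HOL-Probability.Probability"
begin

text \<open>Agents are the natural numbers 0,...,N-1. A network is a set of links,
each link being a two-element set {i,j} of agents.\<close>

text \<open>Unordered pairs of distinct agents, represented as (i,j) with i < j.\<close>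
definition Pairs :: "nat \<Rightarrow> (nat \<times> nat) set" where
  "Pairs N = {(i, j). i < j \<and> j < N}"

definition adj_rel :: "nat set set \<Rightarrow> (nat \<times> nat) set" where
  "adj_rel g = {(a, b). a \<noteq> b \<and> {a, b} \<in> g}"

definition conn :: "nat set set \<Rightarrow> nat \<Rightarrow> nat \<Rightarrow> bool" where
  "conn g a b \<longleftrightarrow> (a, b) \<in> (adj_rel g)\<^sup>*"

definition dist :: "nat set set \<Rightarrow> nat \<Rightarrow> nat \<Rightarrow> nat" where
  "dist g a b = (LEAST n. (a, b) \<in> adj_rel g ^^ n)"

text \<open>Knowledge relation K (simple updating rule): (i,j) \<in> K iff i knows j's type,
  otherwise i's belief about j's type is the prior H, whose mean of f is e.\<close>
definition exp_payoff ::
  "nat \<Rightarrow> real \<Rightarrow> real \<Rightarrow> ('x \<Rightarrow> real) \<Rightarrow> (nat \<Rightarrow> 'x) \<Rightarrow> real \<Rightarrow>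
   nat set set \<Rightarrow> (nat \<times> nat) set \<Rightarrow> nat \<Rightarrow> real" where
  "exp_payoff N \<delta> c f \<kappa> e g K i =
     (\<Sum>j \<in> {j. j < N \<and> j \<noteq> i \<and> conn g i j}.
        \<delta> ^ (dist g i j - 1) * (if (i, j) \<in> K then f (\<kappa> j) else e))
     - c * real (card {j. j < N \<and> j \<noteq> i \<and> {i, j} \<in> g})"

text \<open>One period: pair (i,j) is selected; each agent agrees iff his expected payoff
  with the link is at least that without it (SOE, myopic); the link is present iff
  both agree; then everyone connected in the new network learns each other's type.\<close>
definition step ::
  "nat \<Rightarrow> real \<Rightarrow> real \<Rightarrow> ('x \<Rightarrow> real) \<Rightarrow> (nat \<Rightarrow> 'x) \<Rightarrow> real \<Rightarrow>
   nat set set \<times> (nat \<times> nat) set \<Rightarrow> nat \<times> nat \<Rightarrow> nat set set \<times> (nat \<times> nat) set" where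
  "step N \<delta> c f \<kappa> e st p =
     (let g = fst st; K = snd st; i = fst p; j = snd p;
          g1 = g \<union> {{i, j}}; g0 = g - {{i, j}};
          ai = (exp_payoff N \<delta> c f \<kappa> e g1 K i \<ge> exp_payoff N \<delta> c f \<kappa> e g0 K i);
          aj = (exp_payoff N \<delta> c f \<kappa> e g1 K j \<ge> exp_payoff N \<delta> c f \<kappa> e g0 K j);
          g' = (if ai \<and> aj then g1 else g0)
      in (g', K \<union> {(a, b). a \<noteq> b \<and> conn g' a b}))"

text \<open>Running the process from state st along selection path \<gamma>
  (\<gamma> t is the pair selected in period t+1).\<close>
primrec run ::
  "nat \<Rightarrow> real \<Rightarrow> real \<Rightarrow> ('x \<Rightarrow> real) \<Rightarrow> (nat \<Rightarrow> 'x) \<Rightarrow> real \<Rightarrow>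
   nat set set \<times> (nat \<times> nat) set \<Rightarrow> (nat \<Rightarrow> nat \<times> nat) \<Rightarrow> nat \<Rightarrow> nat set set \<times> (nat \<times> nat) set" where
  "run N \<delta> c f \<kappa> e st \<gamma> 0 = st"
| "run N \<delta> c f \<kappa> e st \<gamma> (Suc t) = step N \<delta> c f \<kappa> e (run N \<delta> c f \<kappa> e st \<gamma> t) (\<gamma> t)"

definition state ::
  "nat \<Rightarrow> real \<Rightarrow> real \<Rightarrow> ('x \<Rightarrow> real) \<Rightarrow> (nat \<Rightarrow> 'x) \<Rightarrow> real \<Rightarrow>
   (nat \<Rightarrow> nat \<times> nat) \<Rightarrow> nat \<Rightarrow> nat set set \<times> (nat \<times> nat) set" where
  "state N \<delta> c f \<kappa> e \<gamma> t = run N \<delta> c f \<kappa> e ({}, {}) \<gamma> t"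

definition valid_path :: "nat \<Rightarrow> (nat \<Rightarrow> nat \<times> nat) \<Rightarrow> bool" where
  "valid_path N \<gamma> \<longleftrightarrow> (\<forall>t. \<gamma> t \<in> Pairs N)"

definition complete_info :: "nat \<Rightarrow> (nat \<times> nat) set \<Rightarrow> bool" where
  "complete_info N K \<longleftrightarrow> (\<forall>i<N. \<forall>j<N. i \<noteq> j \<longrightarrow> (i, j) \<in> K)"

definition stable ::
  "nat \<Rightarrow> real \<Rightarrow> real \<Rightarrow> ('x \<Rightarrow> real) \<Rightarrow> (nat \<Rightarrow> 'x) \<Rightarrow> real \<Rightarrow>
   nat set set \<times> (nat \<times> nat) set \<Rightarrow> bool" where
  "stable N \<delta> c f \<kappa> e st \<longleftrightarrow>
     (\<forall>\<gamma>. valid_path N \<gamma> \<longrightarrow> (\<forall>t. fst (run N \<delta> c f \<kappa> e st \<gamma> t) = fst st))"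

definition path_measure :: "nat \<Rightarrow> (nat \<Rightarrow> nat \<times> nat) measure" where
  "path_measure N = PiM UNIV (\<lambda>_::nat. measure_pmf (pmf_of_set (Pairs N)))"

end

theory Submission
  imports Defs
begin

text \<open>If \<open>E[f] < c\<close>, the first link that is ever proposed is worth \<open>E[f] - c < 0\<close> to both
  agents, so it is refused and the empty network with prior beliefs is never left.
  If \<open>E[f] \<ge> c\<close>, an agent who does not yet know \<open>j\<close>'s type gains from linking with \<open>j\<close>:
  the new link contributes \<open>E[f] \<ge> c\<close> and only shortens the paths to everybody else.
  Hence a link forms whenever two mutually unknown agents meet, after which they know
  each other. Every pair is selected almost surely, so information becomes complete;
  and a network in which some pair is still unknown is not stable, since selecting
  that pair adds a link.\<close>

lemma conn_sym:
  assumes "conn g a b"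
  shows "conn g b a"
proof -
  have "sym (adj_rel g)" by (auto simp: sym_def adj_rel_def insert_commute)
  then have "sym ((adj_rel g)\<^sup>*)" by (rule sym_rtrancl)
  then show ?thesis using assms unfolding conn_def by (auto simp: sym_def)
qed

lemma adj_rel_mono: "g \<subseteq> g' \<Longrightarrow> adj_rel g \<subseteq> adj_rel g'"
  by (auto simp: adj_rel_def)

lemma conn_mono: "g \<subseteq> g' \<Longrightarrow> conn g a b \<Longrightarrow> conn g' a b"
  unfolding conn_def by (meson adj_rel_mono rtrancl_mono subsetD)

lemma conn_if_link: "{a, b} \<in> g \<Longrightarrow> a \<noteq> b \<Longrightarrow> conn g a b"
  unfolding conn_def adj_rel_def by auto

lemma conn_empty_imp_eq: "conn {} a b \<Longrightarrow> a = b"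
  unfolding conn_def adj_rel_def by auto

lemma conn_single_link_imp_mem: "conn {{i, j}} a b \<Longrightarrow> a \<in> {i, j} \<Longrightarrow> b \<in> {i, j}"
  unfolding conn_def
proof (induction rule: rtrancl_induct)
  case base then show ?case by simp
next
  case (step y z) then show ?case by (auto simp: adj_rel_def doubleton_eq_iff)
qed

lemma dist_antimono:
  assumes "g \<subseteq> g'" "conn g a b"
  shows "dist g' a b \<le> dist g a b"
proof -
  obtain n where "(a, b) \<in> adj_rel g ^^ n"
    using assms(2) rtrancl_power unfolding conn_def by blast
  then have "(a, b) \<in> adj_rel g ^^ dist g a b"
    unfolding dist_def by (rule LeastI)
  then have "(a, b) \<in> adj_rel g' ^^ dist g a b"
    using relpowp_mono[to_set, of "adj_rel g" "adj_rel g'"] adj_rel_mono[OF assms(1)] by blast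
  then show ?thesis unfolding dist_def by (rule Least_le)
qed

lemma dist_link: "{a, b} \<in> g \<Longrightarrow> a \<noteq> b \<Longrightarrow> dist g a b = 1"
  unfolding dist_def
proof (rule Least_equality)
  show "(a, b) \<in> adj_rel g ^^ 1" if "{a, b} \<in> g" "a \<noteq> b"
    using that by (auto simp: adj_rel_def)
  show "1 \<le> m" if "a \<noteq> b" "(a, b) \<in> adj_rel g ^^ m" for m
    using that by (cases m) auto
qed

subsection \<open>The value of a link to an agent of unknown type\<close>

lemma exp_payoff_add_unknown_link:
  assumes ij: "i \<noteq> j" "j < N" and unknown: "(i, j) \<notin> K"
    and not_conn: "\<not> conn g i j"
    and \<delta>: "0 \<le> \<delta>" "\<delta> \<le> 1" and ce: "c \<le> e" "0 \<le> e"
    and f_nonneg: "\<forall>k<N. 0 \<le> f (\<kappa> k)"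
  shows "exp_payoff N \<delta> c f \<kappa> e g K i \<le> exp_payoff N \<delta> c f \<kappa> e (g \<union> {{i, j}}) K i"
proof -
  define g' where "g' = g \<union> {{i, j}}"
  define w where "w h k = \<delta> ^ (dist h i k - 1) * (if (i, k) \<in> K then f (\<kappa> k) else e)" for h k
  define S where "S h = {k. k < N \<and> k \<noteq> i \<and> conn h i k}" for h
  define L where "L h = {k. k < N \<and> k \<noteq> i \<and> {i, k} \<in> h}" for h
  have payoff: "exp_payoff N \<delta> c f \<kappa> e h K i = sum (w h) (S h) - c * real (card (L h))" for h
    unfolding exp_payoff_def w_def S_def L_def ..
  have "g \<subseteq> g'" by (auto simp: g'_def)
  have S_fin: "finite (S h)" for h by (rule finite_subset[of _ "{..<N}"]) (auto simp: S_def)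
  have S_sub: "insert j (S g) \<subseteq> S g'"
    using ij conn_mono[OF \<open>g \<subseteq> g'\<close>] conn_if_link[of i j g'] by (auto simp: S_def g'_def)
  have "j \<notin> S g" using not_conn by (auto simp: S_def)
  have w_nonneg: "0 \<le> w h k" if "k < N" for h k
    using \<delta> ce f_nonneg that by (auto simp: w_def)
  have w_j: "w g' j = e"
    using dist_link[of i j g'] ij unknown by (auto simp: w_def g'_def)
  have w_mono: "w g k \<le> w g' k" if "k \<in> S g" for k
  proof -
    have "dist g' i k \<le> dist g i k"
      using dist_antimono[OF \<open>g \<subseteq> g'\<close>] that by (auto simp: S_def)
    then have "\<delta> ^ (dist g i k - 1) \<le> \<delta> ^ (dist g' i k - 1)"
      using \<delta> by (intro power_decreasing) auto
    then show ?thesis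
      using that f_nonneg ce by (auto simp: w_def S_def intro: mult_right_mono)
  qed
  have "sum (w g) (S g) + e \<le> sum (w g') (S g) + w g' j"
    using w_j sum_mono[OF w_mono] by simp
  also have "\<dots> = sum (w g') (insert j (S g))"
    using \<open>j \<notin> S g\<close> S_fin by simp
  also have "\<dots> \<le> sum (w g') (S g')"
    using S_sub S_fin w_nonneg by (intro sum_mono2) (auto simp: S_def)
  finally have value_gain: "sum (w g) (S g) + e \<le> sum (w g') (S g')" .
  have "{i, j} \<notin> g" using not_conn conn_if_link ij by blast
  then have "L g' = insert j (L g)" "j \<notin> L g"
    using ij by (auto simp: L_def g'_def doubleton_eq_iff)
  moreover have "finite (L g)" by (rule finite_subset[of _ "{..<N}"]) (auto simp: L_def)
  ultimately have "card (L g') = card (L g) + 1" by simp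
  then show ?thesis
    using value_gain ce unfolding payoff g'_def[symmetric] by (simp add: algebra_simps)
qed

definition knowledge_consistent :: "nat set set \<Rightarrow> (nat \<times> nat) set \<Rightarrow> bool" where
  "knowledge_consistent g K \<longleftrightarrow>
     (\<forall>a b. a \<noteq> b \<and> conn g a b \<longrightarrow> (a, b) \<in> K) \<and> sym K"

lemma snd_step:
  "snd (step N \<delta> c f \<kappa> e st p) =
     snd st \<union> {(a, b). a \<noteq> b \<and> conn (fst (step N \<delta> c f \<kappa> e st p)) a b}"
  by (simp add: step_def Let_def)

lemma knowledge_consistent_step:
  "knowledge_consistent (fst st) (snd st) \<Longrightarrow>
   knowledge_consistent (fst (step N \<delta> c f \<kappa> e st p)) (snd (step N \<delta> c f \<kappa> e st p))"
  unfolding knowledge_consistent_def snd_step sym_def by (auto dest: conn_sym)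

lemma knowledge_consistent_state:
  "knowledge_consistent (fst (state N \<delta> c f \<kappa> e \<gamma> t)) (snd (state N \<delta> c f \<kappa> e \<gamma> t))"
proof (induction t)
  case 0 then show ?case
    by (auto simp: state_def knowledge_consistent_def sym_def dest: conn_empty_imp_eq)
next
  case (Suc t) then show ?case unfolding state_def by (simp add: knowledge_consistent_step)
qed

lemma knowledge_mono:
  "s \<le> t \<Longrightarrow> snd (state N \<delta> c f \<kappa> e \<gamma> s) \<subseteq> snd (state N \<delta> c f \<kappa> e \<gamma> t)"
  by (rule lift_Suc_mono_le[where f = "\<lambda>t. snd (state N \<delta> c f \<kappa> e \<gamma> t)"])
    (simp_all add: state_def snd_step)

lemma step_adds_unknown_link:
  assumes "knowledge_consistent g K" and ij: "i \<noteq> j" "i < N" "j < N"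
    and unknown: "(i, j) \<notin> K"
    and \<delta>: "0 \<le> \<delta>" "\<delta> \<le> 1" and ce: "c \<le> e" "0 \<le> e"
    and f_nonneg: "\<forall>k<N. 0 \<le> f (\<kappa> k)"
  shows "fst (step N \<delta> c f \<kappa> e (g, K) (i, j)) = g \<union> {{i, j}}" and "{i, j} \<notin> g"
proof -
  have not_conn: "\<not> conn g i j" and unknown': "(j, i) \<notin> K"
    using assms(1) unknown ij unfolding knowledge_consistent_def sym_def by blast+
  then show "{i, j} \<notin> g" using conn_if_link ij by blast
  then have "g - {{i, j}} = g" by auto
  moreover have "exp_payoff N \<delta> c f \<kappa> e g K i \<le> exp_payoff N \<delta> c f \<kappa> e (g \<union> {{i, j}}) K i"
    using exp_payoff_add_unknown_link[of i j N K g \<delta> c e f \<kappa>,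
        OF ij(1,3) unknown not_conn \<delta> ce f_nonneg] .
  moreover have "exp_payoff N \<delta> c f \<kappa> e g K j \<le> exp_payoff N \<delta> c f \<kappa> e (g \<union> {{j, i}}) K j"
    using ij not_conn conn_sym
    by (intro exp_payoff_add_unknown_link[of j i N K g \<delta> c e f \<kappa>, OF _ _ unknown' _ \<delta> ce f_nonneg]) auto
  ultimately show "fst (step N \<delta> c f \<kappa> e (g, K) (i, j)) = g \<union> {{i, j}}"
    by (simp add: step_def Let_def insert_commute)
qed

lemma selected_pair_known:
  assumes ij: "i \<noteq> j" "i < N" "j < N" and selected: "\<gamma> t = (i, j)"
    and \<delta>: "0 \<le> \<delta>" "\<delta> \<le> 1" and ce: "c \<le> e" "0 \<le> e"
    and f_nonneg: "\<forall>k<N. 0 \<le> f (\<kappa> k)"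
  shows "(i, j) \<in> snd (state N \<delta> c f \<kappa> e \<gamma> (Suc t))"
proof (cases "(i, j) \<in> snd (state N \<delta> c f \<kappa> e \<gamma> t)")
  case True
  then show ?thesis using knowledge_mono[of t "Suc t" N \<delta> c f \<kappa> e \<gamma>] by auto
next
  case False
  let ?st = "state N \<delta> c f \<kappa> e \<gamma> t"
  have "fst (step N \<delta> c f \<kappa> e (fst ?st, snd ?st) (i, j)) = fst ?st \<union> {{i, j}}"
    using step_adds_unknown_link(1)[of "fst ?st" "snd ?st" i j N \<delta> c e f \<kappa>,
        OF knowledge_consistent_state ij False \<delta> ce f_nonneg] .
  then have "conn (fst (state N \<delta> c f \<kappa> e \<gamma> (Suc t))) i j"
    using selected ij conn_if_link[of i j] by (simp add: state_def)
  then show ?thesis using ij selected by (simp add: state_def snd_step)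
qed

lemma complete_info_if_all_pairs_selected:
  assumes all: "\<forall>p\<in>Pairs N. \<exists>t. \<gamma> t = p"
    and \<delta>: "0 \<le> \<delta>" "\<delta> \<le> 1" and ce: "c \<le> e" "0 \<le> e"
    and f_nonneg: "\<forall>k<N. 0 \<le> f (\<kappa> k)"
  shows "\<exists>T. complete_info N (snd (state N \<delta> c f \<kappa> e \<gamma> T))"
proof -
  obtain time where time: "\<forall>p\<in>Pairs N. \<gamma> (time p) = p" using bchoice[OF all] by blast
  have "finite (Pairs N)"
    by (rule finite_subset[of _ "{..<N} \<times> {..<N}"]) (auto simp: Pairs_def)
  define T where "T = Max (insert 0 ((\<lambda>p. Suc (time p)) ` Pairs N))"
  have known: "(i, j) \<in> snd (state N \<delta> c f \<kappa> e \<gamma> T)" if "i < j" "j < N" for i j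
  proof -
    have p: "(i, j) \<in> Pairs N" using that by (simp add: Pairs_def)
    then have "Suc (time (i, j)) \<le> T"
      unfolding T_def using \<open>finite (Pairs N)\<close> by (intro Max_ge) auto
    moreover have "(i, j) \<in> snd (state N \<delta> c f \<kappa> e \<gamma> (Suc (time (i, j))))"
      using that time p
      by (intro selected_pair_known[of i j N \<gamma> "time (i, j)" \<delta> c e f \<kappa>, OF _ _ _ _ \<delta> ce f_nonneg])
        auto
    ultimately show ?thesis using knowledge_mono by blast
  qed
  have "(i, j) \<in> snd (state N \<delta> c f \<kappa> e \<gamma> T)" if "i < N" "j < N" "i \<noteq> j" for i j
  proof (cases "i < j")
    case False
    then have "(j, i) \<in> snd (state N \<delta> c f \<kappa> e \<gamma> T)" using that known by simp
    then show ?thesis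
      using knowledge_consistent_state unfolding knowledge_consistent_def sym_def by blast
  qed (use that known in simp)
  then show ?thesis unfolding complete_info_def by blast
qed

lemma stable_imp_complete_info:
  assumes \<delta>: "0 \<le> \<delta>" "\<delta> \<le> 1" and ce: "c \<le> e" "0 \<le> e"
    and f_nonneg: "\<forall>k<N. 0 \<le> f (\<kappa> k)"
    and stable: "stable N \<delta> c f \<kappa> e (g, K)" and consistent: "knowledge_consistent g K"
  shows "complete_info N K"
proof (rule ccontr)
  assume "\<not> complete_info N K"
  then obtain i j where ij: "i < N" "j < N" "i \<noteq> j" "(i, j) \<notin> K"
    unfolding complete_info_def by blast
  then have "(j, i) \<notin> K" using consistent unfolding knowledge_consistent_def sym_def by blast
  define a where "a = min i j"
  define b where "b = max i j"
  have ab: "a \<noteq> b" "a < N" "b < N" "(a, b) \<notin> K" "a < b"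
    using ij \<open>(j, i) \<notin> K\<close> by (auto simp: a_def b_def min_def max_def)
  then have "valid_path N (\<lambda>_. (a, b))" by (simp add: valid_path_def Pairs_def)
  then have "fst (run N \<delta> c f \<kappa> e (g, K) (\<lambda>_. (a, b)) 1) = g"
    using stable unfolding stable_def by fastforce
  moreover have "fst (step N \<delta> c f \<kappa> e (g, K) (a, b)) = g \<union> {{a, b}}" "{a, b} \<notin> g"
    using step_adds_unknown_link[of g K a b N \<delta> c e f \<kappa>, OF consistent ab(1-4) \<delta> ce f_nonneg]
    by blast+
  ultimately show False by auto
qed

subsection \<open>The case \<open>E[f] < c\<close>\<close>

lemma step_empty_unprofitable:
  assumes ij: "i < j" "j < N" and ec: "e < c"
  shows "step N \<delta> c f \<kappa> e ({}, {}) (i, j) = ({}, {})"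
proof -
  have "{k. k < N \<and> k \<noteq> i \<and> conn {{i, j}} i k} = {j}"
    using ij conn_single_link_imp_mem[of i j i] conn_if_link[of i j "{{i, j}}"] by auto
  moreover have "{k. k < N \<and> k \<noteq> i \<and> {i, k} \<in> {{i, j}}} = {j}"
    using ij by (auto simp: doubleton_eq_iff)
  moreover have "dist {{i, j}} i j = 1" using ij by (intro dist_link) auto
  ultimately have "exp_payoff N \<delta> c f \<kappa> e {{i, j}} {} i = e - c"
    unfolding exp_payoff_def by simp
  moreover have "exp_payoff N \<delta> c f \<kappa> e {} {} i = 0"
  proof -
    have "{k. k < N \<and> k \<noteq> i \<and> conn {} i k} = {}"
      by (auto dest: conn_empty_imp_eq)
    then show ?thesis unfolding exp_payoff_def by (simp only:) simp
  qed
  ultimately show ?thesis using ec by (auto simp: step_def Let_def dest: conn_empty_imp_eq)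
qed

lemma state_empty_if_unprofitable:
  assumes "valid_path N \<gamma>" "e < c"
  shows "state N \<delta> c f \<kappa> e \<gamma> t = ({}, {})"
proof (induction t)
  case 0 then show ?case by (simp add: state_def)
next
  case (Suc t)
  obtain i j where selected: "\<gamma> t = (i, j)" by fastforce
  then have "(i, j) \<in> Pairs N" using assms(1) unfolding valid_path_def by metis
  then have "i < j" "j < N" by (simp_all add: Pairs_def)
  then show ?case
    using Suc selected step_empty_unprofitable[OF _ _ assms(2)] by (simp add: state_def)
qed

subsection \<open>Every pair is eventually selected\<close>

lemma AE_iid_pmf_eventually_hits:
  assumes "pmf p x > 0"
  shows "AE \<omega> in PiM UNIV (\<lambda>_::nat. measure_pmf p). \<exists>t. \<omega> t = x"
proof -
  interpret sequence_space "measure_pmf p" by unfold_locales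
  define r where "r = measure_pmf.prob p (UNIV - {x})"
  have "r = 1 - pmf p x"
    unfolding r_def using measure_pmf.prob_compl[of "{x}" p] by (simp add: measure_pmf_single)
  then have r: "0 \<le> r" "r < 1" using assms pmf_le_1[of p x] by simp_all
  have "(\<lambda>n. \<Prod>i\<le>n. measure_pmf.prob p (UNIV - {x})) \<longlonglongrightarrow> measure S (Pi UNIV (\<lambda>_. UNIV - {x}))"
    by (rule measure_PiM_countable) simp
  moreover have "(\<lambda>n. \<Prod>i\<le>n. measure_pmf.prob p (UNIV - {x})) = (\<lambda>n. r ^ Suc n)"
    by (simp add: r_def)
  moreover have "(\<lambda>n. r ^ Suc n) \<longlonglongrightarrow> 0"
    using r by (intro LIMSEQ_Suc LIMSEQ_power_zero) auto
  ultimately have "measure S (Pi UNIV (\<lambda>_. UNIV - {x})) = 0" by (metis LIMSEQ_unique)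
  then have "Pi UNIV (\<lambda>_. UNIV - {x}) \<in> null_sets S"
    by (simp add: emeasure_eq_measure null_sets_def infprod_in_sets)
  moreover have "{\<omega> \<in> space S. \<not> (\<exists>t. \<omega> t = x)} \<subseteq> Pi UNIV (\<lambda>_. UNIV - {x})" by auto
  ultimately show ?thesis by (rule AE_I')
qed

lemma AE_all_pairs_selected:
  assumes "N \<ge> 2"
  shows "AE \<gamma> in path_measure N. \<forall>p\<in>Pairs N. \<exists>t. \<gamma> t = p"
proof -
  have "finite (Pairs N)"
    by (rule finite_subset[of _ "{..<N} \<times> {..<N}"]) (auto simp: Pairs_def)
  moreover have "(0, 1) \<in> Pairs N" using assms by (simp add: Pairs_def)
  then have "Pairs N \<noteq> {}" by blast
  ultimately have "AE \<gamma> in path_measure N. \<exists>t. \<gamma> t = p" if "p \<in> Pairs N" for p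
    unfolding path_measure_def using that by (intro AE_iid_pmf_eventually_hits pmf_positive) simp
  then show ?thesis
    by (intro AE_ball_countable') (auto intro: countable_finite \<open>finite (Pairs N)\<close>)
qed

theorem proposition1:
  fixes N :: nat and \<delta> c :: real and H :: "'x measure"
    and f :: "'x \<Rightarrow> real" and \<kappa> :: "nat \<Rightarrow> 'x"
  assumes "N \<ge> 2" and "0 < \<delta>" and "\<delta> < 1" and "0 < c"
    and "prob_space H" and "integrable H f"
    and "\<forall>x \<in> space H. 0 < f x"
    and "\<forall>i < N. \<kappa> i \<in> space H"
  shows "(integral\<^sup>L H f < c \<longrightarrow>
            (\<forall>\<gamma>. valid_path N \<gamma> \<longrightarrow>
               (\<forall>t. fst (state N \<delta> c f \<kappa> (integral\<^sup>L H f) \<gamma> t) = {}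
                  \<and> snd (state N \<delta> c f \<kappa> (integral\<^sup>L H f) \<gamma> t) = {}
                  \<and> \<not> complete_info N (snd (state N \<delta> c f \<kappa> (integral\<^sup>L H f) \<gamma> t)))))
       \<and> (c \<le> integral\<^sup>L H f \<longrightarrow>
            (AE \<gamma> in path_measure N.
               \<exists>t. complete_info N (snd (state N \<delta> c f \<kappa> (integral\<^sup>L H f) \<gamma> t)))
            \<and> (\<forall>\<gamma>. valid_path N \<gamma> \<longrightarrow>
                 (\<forall>t. stable N \<delta> c f \<kappa> (integral\<^sup>L H f) (state N \<delta> c f \<kappa> (integral\<^sup>L H f) \<gamma> t)
                     \<longrightarrow> complete_info N (snd (state N \<delta> c f \<kappa> (integral\<^sup>L H f) \<gamma> t)))))"
proof -
  let ?e = "integral\<^sup>L H f"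
  have \<delta>: "0 \<le> \<delta>" "\<delta> \<le> 1" using assms(2,3) by simp_all
  have f_nonneg: "\<forall>k<N. 0 \<le> f (\<kappa> k)" using assms(7,8) by (auto intro: less_imp_le)
  show ?thesis
  proof (intro conjI impI allI)
    fix \<gamma> t assume "?e < c" "valid_path N \<gamma>"
    have "(0::nat) < N" "(1::nat) < N" using assms(1) by simp_all
    then have "\<not> complete_info N {}" unfolding complete_info_def by blast
    moreover have "state N \<delta> c f \<kappa> ?e \<gamma> t = ({}, {})"
      using state_empty_if_unprofitable \<open>valid_path N \<gamma>\<close> \<open>?e < c\<close> by blast
    ultimately show "fst (state N \<delta> c f \<kappa> ?e \<gamma> t) = {}" "snd (state N \<delta> c f \<kappa> ?e \<gamma> t) = {}"
      "\<not> complete_info N (snd (state N \<delta> c f \<kappa> ?e \<gamma> t))" by simp_all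
  next
    assume "c \<le> ?e"
    then have ce: "c \<le> ?e" "0 \<le> ?e" using assms(4) by simp_all
    show "AE \<gamma> in path_measure N. \<exists>t. complete_info N (snd (state N \<delta> c f \<kappa> ?e \<gamma> t))"
      using AE_all_pairs_selected[OF assms(1)]
      by (rule eventually_mono)
        (rule complete_info_if_all_pairs_selected[of N _ \<delta> c ?e f \<kappa>, OF _ \<delta> ce f_nonneg])
    fix \<gamma> t
    let ?st = "state N \<delta> c f \<kappa> ?e \<gamma> t"
    assume "stable N \<delta> c f \<kappa> ?e ?st"
    then have "stable N \<delta> c f \<kappa> ?e (fst ?st, snd ?st)" by simp
    then show "complete_info N (snd ?st)"
      by (rule stable_imp_complete_info[of \<delta> c ?e N f \<kappa> "fst ?st" "snd ?st",
            OF \<delta> ce f_nonneg _ knowledge_consistent_state])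
  qed
qed

end
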